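(* Let $P:\mathbb{R}^d\to\mathbb{R}$ be a non-constant homogeneous polynomial of degree $k$, let $p=P|_{\mathbb{S}^{d-1}}$, and let $y_0\in\mathbb{S}^{d-1}$ be a critical point of $p$. Let $\partial^2P(y_0)=[\partial^2_{ij}P(y_0)]$ be the Euclidean Hessian matrix of $P$ at $y_0$ and $D^2p(y_0)$ the Hessian of $p$ at $y_0$, a symmetric bilinear form on $T_{y_0}\mathbb{S}^{d-1}$. If $\mathrm{tr}\,\partial^2P(y_0)\le k(k+d-2)P(y_0)$ and $D^2p(y_0)$ does not vanish as a bilinear form on $T_{y_0}\mathbb{S}^{d-1}$, then there exists $z\in T_{y_0}\mathbb{S}^{d-1}$ with $D^2p(y_0)(z,z)<0$.
   Context: $\mathbb{S}^{d-1}\subset\mathbb{R}^d$ is the Euclidean unit sphere with the induced metric. *)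

theory Defs
  imports "HOL-Analysis.Analysis"
begin

definition hom_poly :: "nat \<Rightarrow> (real^'n \<Rightarrow> real) \<Rightarrow> bool" where
  "hom_poly k P \<longleftrightarrow> (\<exists>(A :: ('n \<Rightarrow> nat) set) (c :: ('n \<Rightarrow> nat) \<Rightarrow> real).
      finite A \<and> (\<forall>\<alpha>\<in>A. (\<Sum>i\<in>UNIV. \<alpha> i) = k) \<and>
      P = (\<lambda>x. \<Sum>\<alpha>\<in>A. c \<alpha> * (\<Prod>i\<in>UNIV. (x $ i) ^ (\<alpha> i))))"

text \<open>Unit-speed-scaled great circle geodesic of the unit sphere through y with velocity z
  (z tangent at y): gamma(0) = y, gamma'(0) = z.\<close>
definition sph_geod :: "real^'n \<Rightarrow> real^'n \<Rightarrow> real \<Rightarrow> real^'n" where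
  "sph_geod y z t = cos (norm z * t) *\<^sub>R y + (sin (norm z * t) / norm z) *\<^sub>R z"

text \<open>Critical point of p = P restricted to the sphere: dp(y)(z) = (p o gamma)'(0) = 0.\<close>
definition sph_critical :: "(real^'n \<Rightarrow> real) \<Rightarrow> real^'n \<Rightarrow> bool" where
  "sph_critical P y \<longleftrightarrow> norm y = 1 \<and>
     (\<forall>z. z \<bullet> y = 0 \<longrightarrow> deriv (\<lambda>t. P (sph_geod y z t)) 0 = 0)"

text \<open>Riemannian Hessian quadratic form of p at y: D^2 p(y)(z,z) = (p o gamma)''(0),
  gamma the geodesic with gamma'(0) = z; bilinear form by polarization.\<close>
definition sph_hess_quad :: "(real^'n \<Rightarrow> real) \<Rightarrow> real^'n \<Rightarrow> real^'n \<Rightarrow> real" where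
  "sph_hess_quad P y z = deriv (deriv (\<lambda>t. P (sph_geod y z t))) 0"

definition sph_hess :: "(real^'n \<Rightarrow> real) \<Rightarrow> real^'n \<Rightarrow> real^'n \<Rightarrow> real^'n \<Rightarrow> real" where
  "sph_hess P y z w = (sph_hess_quad P y (z + w) - sph_hess_quad P y z - sph_hess_quad P y w) / 2"

definition eucl_hess_trace :: "(real^'n \<Rightarrow> real) \<Rightarrow> real^'n \<Rightarrow> real" where
  "eucl_hess_trace P y = (\<Sum>i\<in>UNIV. deriv (deriv (\<lambda>t. P (y + t *\<^sub>R axis i 1))) 0)"

end

theory Submission
  imports Defs
begin

(*
  Along the great circle with initial point y and velocity z the acceleration at time 0 is
  -|z|^2 y. Hence, by the second-order chain rule and Euler's identity dP(y)(y) = k P(y),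
  the spherical Hessian at y is the restriction to the tangent space of the symmetric form
  B(u,w) = d^2P(y)(u,w) - k P(y) <u,w>. As d^2P(y)(y,y) = k(k-1) P(y), the trace hypothesis
  says precisely that the trace of B over the tangent space, tr B - B(y,y), is at most 0.
  If B were positive semidefinite on the tangent space, it would therefore vanish on the
  tangential projections of the standard basis vectors; a null vector of a form that is
  semidefinite on a subspace is orthogonal to that subspace, so B would vanish on the whole
  tangent space.
*)

lemma real_polynomial_function_has_derivative:
  assumes "real_polynomial_function f"
  shows "\<exists>f'. (\<forall>x. (f has_derivative f' x) (at x)) \<and> (\<forall>v. real_polynomial_function (\<lambda>x. f' x v))"
  using assms
proof induction
  case (linear f)
  then show ?case
    by (intro exI[of _ "\<lambda>x. f"]) (auto intro: bounded_linear_imp_has_derivative)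
next
  case (const c)
  then show ?case
    by (intro exI[of _ "\<lambda>x v. 0"]) auto
next
  case (add f g)
  then obtain f' g' where "\<And>x. (f has_derivative f' x) (at x)" "\<And>v. real_polynomial_function (\<lambda>x. f' x v)"
    "\<And>x. (g has_derivative g' x) (at x)" "\<And>v. real_polynomial_function (\<lambda>x. g' x v)"
    by blast
  then show ?case
    by (intro exI[of _ "\<lambda>x v. f' x v + g' x v"] conjI allI has_derivative_add
        real_polynomial_function.intros(3))
next
  case (mult f g)
  then obtain f' g' where "\<And>x. (f has_derivative f' x) (at x)" "\<And>v. real_polynomial_function (\<lambda>x. f' x v)"
    "\<And>x. (g has_derivative g' x) (at x)" "\<And>v. real_polynomial_function (\<lambda>x. g' x v)"
    by blast
  with mult.hyps show ?case
    by (intro exI[of _ "\<lambda>x v. f x * g' x v + f' x v * g x"] conjI allI has_derivative_mult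
        real_polynomial_function.intros(3,4))
qed

lemma has_real_derivative_comp_curve:
  fixes g :: "'a::real_normed_vector \<Rightarrow> real"
  assumes "(g has_derivative g') (at (\<gamma> t))" and "(\<gamma> has_vector_derivative v) (at t)"
  shows "((\<lambda>t. g (\<gamma> t)) has_real_derivative g' v) (at t)"
proof -
  have "((\<lambda>t. g (\<gamma> t)) has_derivative (\<lambda>h. g' (h *\<^sub>R v))) (at t)"
    using has_derivative_compose[OF assms(2)[unfolded has_vector_derivative_def] assms(1)] .
  moreover have "(\<lambda>h. g' (h *\<^sub>R v)) = (*) (g' v)"
    using linear_scale[OF has_derivative_linear[OF assms(1)]] by (auto simp: mult.commute)
  ultimately show ?thesis
    by (simp add: has_field_derivative_def)
qed

lemma linear_real_Basis_expansion:
  fixes g :: "'a::euclidean_space \<Rightarrow> real"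
  assumes "linear g"
  shows "g v = (\<Sum>b\<in>Basis. (v \<bullet> b) * g b)"
proof -
  have "g v = g (\<Sum>b\<in>Basis. (v \<bullet> b) *\<^sub>R b)"
    by (simp add: euclidean_representation)
  also have "\<dots> = (\<Sum>b\<in>Basis. (v \<bullet> b) * g b)"
    by (simp add: linear_sum[OF assms] linear_scale[OF assms])
  finally show ?thesis .
qed

(* D2 v x w is the derivative at x, in direction w, of the directional derivative x \<mapsto> D1 x v. *)
locale second_derivatives =
  fixes f :: "'a::euclidean_space \<Rightarrow> real" and D1 :: "'a \<Rightarrow> 'a \<Rightarrow> real"
    and D2 :: "'a \<Rightarrow> 'a \<Rightarrow> 'a \<Rightarrow> real"
  assumes has_derivative_D1: "\<And>x. (f has_derivative D1 x) (at x)"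
    and has_derivative_D2: "\<And>v x. ((\<lambda>x. D1 x v) has_derivative D2 v x) (at x)"

context second_derivatives
begin

lemma linear_D1: "linear (D1 x)"
  using has_derivative_D1 by (rule has_derivative_linear)

lemma linear_D2_left: "linear (\<lambda>u. D2 u x w)"
proof (rule linearI)
  fix a b :: 'a and r :: real
  have "((\<lambda>x. D1 x (a + b)) has_derivative (\<lambda>w. D2 a x w + D2 b x w)) (at x)"
    unfolding linear_add[OF linear_D1] by (intro has_derivative_add has_derivative_D2)
  then show "D2 (a + b) x w = D2 a x w + D2 b x w"
    using has_derivative_unique[OF has_derivative_D2] by metis
  have "((\<lambda>x. D1 x (r *\<^sub>R a)) has_derivative (\<lambda>w. r * D2 a x w)) (at x)"
    unfolding linear_scale[OF linear_D1] real_scaleR_def by (intro has_derivative_mult_right has_derivative_D2)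
  then show "D2 (r *\<^sub>R a) x w = r *\<^sub>R D2 a x w"
    using has_derivative_unique[OF has_derivative_D2] by (metis real_scaleR_def)
qed

lemma bilinear_D2: "bilinear (\<lambda>u w. D2 u x w)"
  unfolding bilinear_def
  using linear_D2_left has_derivative_linear[OF has_derivative_D2] by blast

lemma has_real_derivative_comp:
  "(\<gamma> has_vector_derivative v) (at t) \<Longrightarrow> ((\<lambda>t. f (\<gamma> t)) has_real_derivative D1 (\<gamma> t) v) (at t)"
  using has_derivative_D1 by (rule has_real_derivative_comp_curve)

lemma deriv2_comp:
  assumes \<gamma>: "\<And>t. (\<gamma> has_vector_derivative \<gamma>' t) (at t)"
    and \<gamma>': "\<And>t. (\<gamma>' has_vector_derivative \<gamma>'' t) (at t)"
  shows "deriv (deriv (\<lambda>t. f (\<gamma> t))) t = D2 (\<gamma>' t) (\<gamma> t) (\<gamma>' t) + D1 (\<gamma> t) (\<gamma>'' t)"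
proof -
  \<comment> \<open>In a basis, t \<mapsto> D1 (\<gamma> t) (\<gamma>' t) becomes a finite sum of products of differentiable functions.\<close>
  have "deriv (\<lambda>t. f (\<gamma> t)) = (\<lambda>s. \<Sum>b\<in>Basis. (\<gamma>' s \<bullet> b) * D1 (\<gamma> s) b)"
  proof
    fix s
    show "deriv (\<lambda>t. f (\<gamma> t)) s = (\<Sum>b\<in>Basis. (\<gamma>' s \<bullet> b) * D1 (\<gamma> s) b)"
      unfolding DERIV_imp_deriv[OF has_real_derivative_comp[OF \<gamma>]]
      by (rule linear_real_Basis_expansion[OF linear_D1])
  qed
  moreover have "((\<lambda>s. \<Sum>b\<in>Basis. (\<gamma>' s \<bullet> b) * D1 (\<gamma> s) b) has_real_derivative
      (\<Sum>b\<in>Basis. (\<gamma>'' t \<bullet> b) * D1 (\<gamma> t) b + D2 b (\<gamma> t) (\<gamma>' t) * (\<gamma>' t \<bullet> b))) (at t)"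
    by (intro DERIV_sum DERIV_mult has_real_derivative_comp_curve[OF _ \<gamma>']
        has_real_derivative_comp_curve[OF has_derivative_D2 \<gamma>]
        bounded_linear_imp_has_derivative bounded_linear_inner_left)
  moreover have "(\<Sum>b\<in>Basis. (\<gamma>'' t \<bullet> b) * D1 (\<gamma> t) b + D2 b (\<gamma> t) (\<gamma>' t) * (\<gamma>' t \<bullet> b))
      = D2 (\<gamma>' t) (\<gamma> t) (\<gamma>' t) + D1 (\<gamma> t) (\<gamma>'' t)"
    using linear_real_Basis_expansion[OF linear_D1, of "\<gamma> t" "\<gamma>'' t", symmetric]
      linear_real_Basis_expansion[OF linear_D2_left, of "\<gamma>' t" "\<gamma> t" "\<gamma>' t", symmetric]
    by (simp add: sum.distrib mult.commute)
  ultimately show ?thesis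
    using DERIV_imp_deriv by metis
qed

lemma deriv2_along_line: "deriv (deriv (\<lambda>t. f (x + t *\<^sub>R v))) 0 = D2 v x v"
proof -
  have "deriv (deriv (\<lambda>t. f (x + t *\<^sub>R v))) 0 = D2 v (x + 0 *\<^sub>R v) v + D1 (x + 0 *\<^sub>R v) 0"
    by (rule deriv2_comp) (auto intro!: derivative_eq_intros)
  then show ?thesis
    by (simp add: linear_0[OF linear_D1])
qed

end

lemma real_polynomial_function_second_derivatives:
  fixes f :: "'a::euclidean_space \<Rightarrow> real"
  assumes "real_polynomial_function f"
  obtains D1 D2 where "second_derivatives f D1 D2"
proof -
  obtain D1 where D1: "\<And>x. (f has_derivative D1 x) (at x)"
    and poly: "\<And>v. real_polynomial_function (\<lambda>x. D1 x v)"
    using real_polynomial_function_has_derivative[OF assms] by blast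
  have "\<forall>v. \<exists>D. \<forall>x. ((\<lambda>x. D1 x v) has_derivative D x) (at x)"
    using real_polynomial_function_has_derivative[OF poly] by blast
  then obtain D2 where "\<And>v x. ((\<lambda>x. D1 x v) has_derivative D2 v x) (at x)"
    by metis
  with D1 show thesis
    by (intro that) (unfold_locales)
qed

lemma hom_poly_real_polynomial_function: "hom_poly k P \<Longrightarrow> real_polynomial_function P"
  unfolding hom_poly_def
  by (force intro: real_polynomial_function_sum real_polynomial_function_prod
      real_polynomial_function_power bounded_linear_vec_nth)

lemma hom_poly_scaleR: "hom_poly k P \<Longrightarrow> P (t *\<^sub>R x) = t ^ k * P x"
  unfolding hom_poly_def
  by (auto simp: sum_distrib_left power_mult_distrib prod.distrib power_sum[symmetric]
      intro!: sum.cong)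

lemma hom_poly_along_ray:
  assumes "hom_poly k P"
  shows "(\<lambda>t. P (y + t *\<^sub>R y)) = (\<lambda>t. (1 + t) ^ k * P y)"
proof
  fix t
  have "y + t *\<^sub>R y = (1 + t) *\<^sub>R y"
    by (simp add: algebra_simps)
  then show "P (y + t *\<^sub>R y) = (1 + t) ^ k * P y"
    using hom_poly_scaleR[OF assms] by simp
qed

lemma hom_poly_euler:
  assumes "hom_poly k P" and "second_derivatives P D1 D2"
  shows "D1 y y = k * P y"
proof -
  interpret second_derivatives P D1 D2 by fact
  have "((\<lambda>t. P (y + t *\<^sub>R y)) has_real_derivative D1 (y + 0 *\<^sub>R y) y) (at 0)"
    by (rule has_real_derivative_comp) (auto intro!: derivative_eq_intros)
  moreover have "((\<lambda>t. P (y + t *\<^sub>R y)) has_real_derivative real k * P y) (at 0)"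
    unfolding hom_poly_along_ray[OF assms(1)] by (auto intro!: derivative_eq_intros)
  ultimately show ?thesis
    using DERIV_unique by force
qed

lemma hom_poly_euler_second_order:
  assumes "hom_poly k P" and "second_derivatives P D1 D2"
  shows "D2 y y y = real k * (real k - 1) * P y"
proof -
  interpret second_derivatives P D1 D2 by fact
  have "deriv (\<lambda>t. (1 + t) ^ k * P y) t = real k * (1 + t) ^ (k - 1) * P y" for t :: real
    by (rule DERIV_imp_deriv) (auto intro!: derivative_eq_intros)
  then have "deriv (\<lambda>t. (1 + t) ^ k * P y) = (\<lambda>t. real k * (1 + t) ^ (k - 1) * P y)"
    by (rule ext)
  then have "D2 y y y = deriv (\<lambda>t. real k * (1 + t) ^ (k - 1) * P y) 0"
    using deriv2_along_line[of y y] unfolding hom_poly_along_ray[OF assms(1)] by simp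
  also have "\<dots> = real k * (real k - 1) * P y"
  proof (rule DERIV_imp_deriv)
    show "((\<lambda>t. real k * (1 + t) ^ (k - 1) * P y) has_real_derivative real k * (real k - 1) * P y) (at 0)"
      by (cases k) (auto intro!: derivative_eq_intros)
  qed
  finally show ?thesis .
qed

lemma sph_geod_0 [simp]: "sph_geod y z 0 = y"
  by (simp add: sph_geod_def)

lemma has_vector_derivative_sph_geod:
  "(sph_geod y z has_vector_derivative
     (- norm z * sin (norm z * t)) *\<^sub>R y + cos (norm z * t) *\<^sub>R z) (at t)"
proof (cases "z = 0")
  case True
  then show ?thesis
    unfolding sph_geod_def by (auto intro!: derivative_eq_intros)
next
  case False
  then show ?thesis
    unfolding sph_geod_def[abs_def]
    by (auto intro!: derivative_eq_intros simp: field_simps)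
qed

lemma has_vector_derivative_sph_geod_velocity:
  "((\<lambda>t. (- norm z * sin (norm z * t)) *\<^sub>R y + cos (norm z * t) *\<^sub>R z) has_vector_derivative
     (- (norm z)\<^sup>2 * cos (norm z * t)) *\<^sub>R y + (- norm z * sin (norm z * t)) *\<^sub>R z) (at t)"
  by (rule derivative_eq_intros refl | simp add: field_simps power2_eq_square)+

lemma sph_hess_quad_eq:
  assumes "second_derivatives P D1 D2"
  shows "sph_hess_quad P y z = D2 z y z - (z \<bullet> z) * D1 y y"
proof -
  interpret second_derivatives P D1 D2 by fact
  have "sph_hess_quad P y z = D2 z y z + D1 y ((- (norm z)\<^sup>2) *\<^sub>R y)"
    unfolding sph_hess_quad_def
    using deriv2_comp[OF has_vector_derivative_sph_geod has_vector_derivative_sph_geod_velocity, of y z 0]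
    by simp
  then show ?thesis
    by (simp add: linear_neg[OF linear_D1] linear_scale[OF linear_D1] power2_norm_eq_inner)
qed

lemma sph_hess_eq:
  assumes "second_derivatives P D1 D2"
  shows "sph_hess P y u w = (D2 u y w + D2 w y u) / 2 - (u \<bullet> w) * D1 y y"
proof -
  interpret second_derivatives P D1 D2 by fact
  show ?thesis
    unfolding sph_hess_def sph_hess_quad_eq[OF assms]
    by (simp add: bilinear_ladd[OF bilinear_D2] bilinear_radd[OF bilinear_D2] inner_add
        inner_commute field_simps)
qed

lemma sph_hess_commute: "sph_hess P y u w = sph_hess P y w u"
  by (simp add: sph_hess_def add.commute)

lemma bilinear_sph_hess:
  assumes "second_derivatives P D1 D2"
  shows "bilinear (sph_hess P y)"
proof -
  interpret second_derivatives P D1 D2 by fact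
  show ?thesis
    unfolding bilinear_def sph_hess_eq[OF assms, abs_def]
    by (auto simp: linear_iff bilinear_ladd[OF bilinear_D2] bilinear_radd[OF bilinear_D2]
        bilinear_lmul[OF bilinear_D2] bilinear_rmul[OF bilinear_D2] inner_add inner_commute
        field_simps)
qed

lemma sum_axis_eq_sum_Basis:
  "(\<Sum>i\<in>UNIV. g (axis i (1::real))) = (\<Sum>b\<in>(Basis :: (real^'n) set). g b)"
proof -
  have "inj (\<lambda>i. axis i (1::real) :: real^'n)"
    by (auto intro: injI simp: axis_eq_axis)
  then have "(\<Sum>b\<in>range (\<lambda>i. axis i 1). g b) = (\<Sum>i\<in>UNIV. g (axis i (1::real) :: real^'n))"
    by (simp add: sum.reindex)
  moreover have "(Basis :: (real^'n) set) = range (\<lambda>i. axis i 1)"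
    by (auto simp: Basis_vec_def)
  ultimately show ?thesis
    by simp
qed

lemma eucl_hess_trace_eq:
  assumes "second_derivatives P D1 D2"
  shows "eucl_hess_trace P y = (\<Sum>b\<in>Basis. D2 b y b)"
proof -
  interpret second_derivatives P D1 D2 by fact
  show ?thesis
    unfolding eucl_hess_trace_def deriv2_along_line by (rule sum_axis_eq_sum_Basis)
qed

lemma nonneg_quadratic_imp_linear_coeff_zero:
  fixes a b :: real
  assumes "\<And>t. 0 \<le> 2 * t * a + t\<^sup>2 * b"
  shows "a = 0"
proof -
  define c where "c = \<bar>b\<bar> + 1"
  have "c > 0"
    by (simp add: c_def add_nonneg_pos)
  have "0 \<le> c\<^sup>2 * (2 * (- a / c) * a + (- a / c)\<^sup>2 * b)"
    using assms[of "- a / c"] by simp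
  also have "\<dots> = a\<^sup>2 * (b - 2 * c)"
    using \<open>c > 0\<close> by (simp add: field_simps power2_eq_square)
  finally have "0 \<le> a\<^sup>2 * (b - 2 * c)" .
  moreover have "b - 2 * c < 0"
    by (simp add: c_def)
  ultimately have "a\<^sup>2 \<le> 0"
    by (simp add: zero_le_mult_iff)
  then show ?thesis
    by simp
qed

lemma psd_bilinear_null_vector_orthogonal:
  fixes B :: "'a::real_vector \<Rightarrow> 'a \<Rightarrow> real"
  assumes B: "bilinear B" and sym: "\<And>u w. B u w = B w u"
    and V: "subspace V" and psd: "\<And>z. z \<in> V \<Longrightarrow> 0 \<le> B z z"
    and "u \<in> V" "w \<in> V" "B u u = 0"
  shows "B u w = 0"
proof (rule nonneg_quadratic_imp_linear_coeff_zero)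
  fix t
  have "0 \<le> B (u + t *\<^sub>R w) (u + t *\<^sub>R w)"
    using assms by (intro psd subspace_add subspace_scale)
  also have "\<dots> = 2 * t * B u w + t\<^sup>2 * B w w"
    using \<open>B u u = 0\<close> sym[of w u]
    by (simp add: bilinear_ladd[OF B] bilinear_radd[OF B] bilinear_lmul[OF B] bilinear_rmul[OF B]
        power2_eq_square algebra_simps)
  finally show "0 \<le> 2 * t * B u w + t\<^sup>2 * B w w" .
qed

lemma bilinear_trace_orthogonal_projection:
  fixes B :: "'a::euclidean_space \<Rightarrow> 'a \<Rightarrow> real"
  assumes B: "bilinear B" and sym: "\<And>u w. B u w = B w u" and "norm y = 1"
  shows "(\<Sum>b\<in>Basis. B (b - (b \<bullet> y) *\<^sub>R y) (b - (b \<bullet> y) *\<^sub>R y)) = (\<Sum>b\<in>Basis. B b b) - B y y"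
proof -
  have lin: "linear (\<lambda>x. B x y)"
    using B by (simp add: bilinear_def)
  have "(\<Sum>b\<in>Basis. (y \<bullet> b) * B b y) = B (\<Sum>b\<in>Basis. (y \<bullet> b) *\<^sub>R b) y"
    by (simp add: linear_sum[OF lin] linear_scale[OF lin])
  then have mixed: "(\<Sum>b\<in>Basis. (y \<bullet> b) * B b y) = B y y"
    by (simp add: euclidean_representation)
  have square: "(\<Sum>b\<in>Basis. (y \<bullet> b)\<^sup>2) = 1"
    using euclidean_inner[of y y] \<open>norm y = 1\<close> by (simp add: power2_eq_square norm_eq_1)
  have "B (b - (b \<bullet> y) *\<^sub>R y) (b - (b \<bullet> y) *\<^sub>R y) = B b b - 2 * ((y \<bullet> b) * B b y) + (y \<bullet> b)\<^sup>2 * B y y"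
    for b
    using sym[of y b]
    by (simp add: bilinear_lsub[OF B] bilinear_rsub[OF B] bilinear_lmul[OF B] bilinear_rmul[OF B]
        inner_commute power2_eq_square algebra_simps)
  then show ?thesis
    by (simp add: sum_subtractf sum.distrib sum_distrib_left[symmetric] sum_distrib_right[symmetric]
        mixed square)
qed

lemma bilinear_vanishes_on_orthogonal_complement:
  fixes B :: "'a::euclidean_space \<Rightarrow> 'a \<Rightarrow> real"
  assumes B: "bilinear B" and sym: "\<And>u w. B u w = B w u" and y: "norm y = 1"
    and psd: "\<And>z. z \<bullet> y = 0 \<Longrightarrow> 0 \<le> B z z"
    and trace: "(\<Sum>b\<in>Basis. B b b) \<le> B y y"
    and z: "z \<bullet> y = 0" and w: "w \<bullet> y = 0"
  shows "B z w = 0"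
proof -
  define pr where "pr x = x - (x \<bullet> y) *\<^sub>R y" for x
  have yy: "y \<bullet> y = 1"
    using y by (simp add: norm_eq_1)
  have pr_orth: "pr x \<bullet> y = 0" for x
    by (simp add: pr_def inner_diff_left yy)
  have "(\<Sum>b\<in>Basis. B (pr b) (pr b)) \<le> 0"
    using bilinear_trace_orthogonal_projection[OF B sym y] trace by (simp add: pr_def)
  moreover have "\<forall>b\<in>Basis. 0 \<le> B (pr b) (pr b)"
    using psd pr_orth by blast
  ultimately have null: "B (pr b) (pr b) = 0" if "b \<in> Basis" for b
    using sum_nonneg_eq_0_iff[of Basis "\<lambda>b. B (pr b) (pr b)"] that
    by (simp add: order_antisym sum_nonneg)
  have "(\<Sum>b\<in>Basis. (z \<bullet> b) *\<^sub>R pr b)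
      = (\<Sum>b\<in>Basis. (z \<bullet> b) *\<^sub>R b) - (\<Sum>b\<in>Basis. (z \<bullet> b) * (y \<bullet> b)) *\<^sub>R y"
    by (simp add: pr_def scaleR_diff_right sum_subtractf scaleR_sum_left inner_commute)
  also have "\<dots> = z"
    using z by (simp add: euclidean_representation euclidean_inner[of z y, symmetric])
  finally have expansion: "z = (\<Sum>b\<in>Basis. (z \<bullet> b) *\<^sub>R pr b)" ..
  have lin: "linear (\<lambda>x. B x w)"
    using B by (simp add: bilinear_def)
  have V: "subspace {x. x \<bullet> y = 0}"
    by (simp add: subspace_def inner_add_left)
  have "B z w = (\<Sum>b\<in>Basis. (z \<bullet> b) * B (pr b) w)"
    by (subst expansion) (simp add: linear_sum[OF lin] linear_scale[OF lin])
  also have "\<dots> = 0"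
    using psd_bilinear_null_vector_orthogonal[OF B sym V] psd pr_orth null w by simp
  finally show ?thesis .
qed

theorem lemma1p11:
  fixes P :: "real^'n \<Rightarrow> real" and k :: nat and y0 :: "real^'n"
  assumes "hom_poly k P"
    and "\<exists>x x'. P x \<noteq> P x'"
    and "norm y0 = 1"
    and "sph_critical P y0"
    and "eucl_hess_trace P y0 \<le> real k * (real k + real CARD('n) - 2) * P y0"
    and "\<exists>z w. z \<bullet> y0 = 0 \<and> w \<bullet> y0 = 0 \<and> sph_hess P y0 z w \<noteq> 0"
  shows "\<exists>z. z \<bullet> y0 = 0 \<and> sph_hess P y0 z z < 0"
proof (rule ccontr)
  assume "\<not> ?thesis"
  then have psd: "\<And>z. z \<bullet> y0 = 0 \<Longrightarrow> 0 \<le> sph_hess P y0 z z"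
    by (simp add: not_less)
  obtain D1 D2 where P: "second_derivatives P D1 D2"
    using hom_poly_real_polynomial_function[OF assms(1)] by (rule real_polynomial_function_second_derivatives)
  have hess: "sph_hess P y0 u w = (D2 u y0 w + D2 w y0 u) / 2 - (u \<bullet> w) * (real k * P y0)" for u w
    by (simp add: sph_hess_eq[OF P] hom_poly_euler[OF assms(1) P])
  have "(\<Sum>b\<in>Basis. sph_hess P y0 b b) = eucl_hess_trace P y0 - real CARD('n) * (real k * P y0)"
    by (simp add: hess eucl_hess_trace_eq[OF P] sum_subtractf)
  also have "\<dots> \<le> sph_hess P y0 y0 y0"
    using assms(5) assms(3)
    by (simp add: hess hom_poly_euler_second_order[OF assms(1) P] norm_eq_1 algebra_simps)
  finally have "(\<Sum>b\<in>Basis. sph_hess P y0 b b) \<le> sph_hess P y0 y0 y0" .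
  with assms(3) psd have "sph_hess P y0 z w = 0" if "z \<bullet> y0 = 0" "w \<bullet> y0 = 0" for z w
    using bilinear_vanishes_on_orthogonal_complement[OF bilinear_sph_hess[OF P] sph_hess_commute]
      that by blast
  with assms(6) show False
    by blast
qed

end
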